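(* Let spacetime be Minkowski spacetime. Let $x^\mu(\tau)$ be the worldline of an arbitrarily accelerated observer with proper time $\tau$, let $e_{(0)}{}^\mu(\tau)=dx^\mu/d\tau$ be its 4-velocity and let $e_{(i)}(\tau)$, $i=1,2,3$, be its (possibly rotating) orthonormal spatial triad along the worldline. Extend this tetrad to a reference frame $e_a(\bar x^\mu)$ by parallel transporting (with respect to the Levi-Civita connection) the observer's tetrad $e_a(\tau)$ to all neighboring points of the spacelike hyperplane orthogonal to $e_{(0)}(\tau)$, for each $\tau$; here $\bar x^\mu$ are the observer's local coordinates. If $e_a(\bar x^\mu)$ is taken as the teleparallel frame, then the gravitational energy-momentum density $t^{\mu a}$ vanishes (on the region where this frame is defined).
   Context: Signature $(+,-,-,-)$. A tetrad (frame) $e_a=e_a{}^\mu\partial_\mu$ with coframe $\theta^a=e^a{}_\mu dx^\mu$ satisfies $g_{\mu\nu}=\eta_{ab}e^a{}_\mu e^b{}_\nu$; Latin (tangent) indices are raised/lowered with $\eta_{ab}$, Greek ones with $g_{\mu\nu}$, and indices are converted between the two types with the tetrad. Taking $e_a$ as the teleparallel frame means the (Weitzenböck) torsion is $T^a{}_{\mu\nu}=\partial_\mu e^a{}_\nu-\partial_\nu e^a{}_\mu$. Define $T_a=T^b{}_{ba}$, the superpotential $\Sigma^{\lambda\mu\nu}=\tfrac14\big(T^{\lambda\mu\nu}+T^{\mu\lambda\nu}-T^{\nu\lambda\mu}\big)+\tfrac12\big(g^{\lambda\nu}T^{\mu}-g^{\lambda\mu}T^{\nu}\big)$, the torsion scalar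 $T=\Sigma^{abc}T_{abc}$, and the gravitational energy-momentum density $t^{\mu a}=k\big(4\Sigma^{bc\mu}T_{bc}{}^{a}-e^{a\mu}T\big)$ with $k=1/(16\pi)$. *)

theory Defs
  imports "HOL-Analysis.Analysis"
begin

text \<open>Minkowski spacetime in global inertial (Cartesian) coordinates X = (X$0,..,X$3),
  signature (+,-,-,-). All indices (Greek and Latin) range over the type 4.\<close>

definition eta :: "4 \<Rightarrow> 4 \<Rightarrow> real" where
  "eta a b = (if a = b then (if a = 0 then 1 else -1) else 0)"

definition mink :: "real^4 \<Rightarrow> real^4 \<Rightarrow> real" where
  "mink u v = (\<Sum>\<mu>\<in>UNIV. \<Sum>\<nu>\<in>UNIV. eta \<mu> \<nu> * u$\<mu> * v$\<nu>)"

definition pd :: "(real^4 \<Rightarrow> real) \<Rightarrow> 4 \<Rightarrow> real^4 \<Rightarrow> real" where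
  "pd f \<mu> X = frechet_derivative f (at X) (axis \<mu> 1)"

text \<open>A frame field E: E a X $ mu = e_a^mu(X). In Cartesian coordinates g = eta.\<close>
type_synonym frame = "4 \<Rightarrow> real^4 \<Rightarrow> real^4"

definition coframe :: "frame \<Rightarrow> 4 \<Rightarrow> 4 \<Rightarrow> real^4 \<Rightarrow> real" where
  "coframe E a \<mu> X = (\<Sum>b\<in>UNIV. \<Sum>\<nu>\<in>UNIV. eta a b * eta \<mu> \<nu> * (E b X)$\<nu>)"

definition torsion :: "frame \<Rightarrow> 4 \<Rightarrow> 4 \<Rightarrow> 4 \<Rightarrow> real^4 \<Rightarrow> real" where
  "torsion E a \<mu> \<nu> X = pd (\<lambda>Y. coframe E a \<nu> Y) \<mu> X - pd (\<lambda>Y. coframe E a \<mu> Y) \<nu> X"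

definition torL :: "frame \<Rightarrow> 4 \<Rightarrow> 4 \<Rightarrow> 4 \<Rightarrow> real^4 \<Rightarrow> real" where
  "torL E a b c X = (\<Sum>d\<in>UNIV. \<Sum>\<mu>\<in>UNIV. \<Sum>\<nu>\<in>UNIV.
      eta a d * (E b X)$\<mu> * (E c X)$\<nu> * torsion E d \<mu> \<nu> X)"

definition torU :: "frame \<Rightarrow> 4 \<Rightarrow> 4 \<Rightarrow> 4 \<Rightarrow> real^4 \<Rightarrow> real" where
  "torU E a b c X = (\<Sum>d\<in>UNIV. \<Sum>f\<in>UNIV. \<Sum>h\<in>UNIV.
      eta a d * eta b f * eta c h * torL E d f h X)"

definition torTr :: "frame \<Rightarrow> 4 \<Rightarrow> real^4 \<Rightarrow> real" where
  "torTr E a X = (\<Sum>b\<in>UNIV. \<Sum>d\<in>UNIV. eta b d * torL E d b a X)"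

definition torTrU :: "frame \<Rightarrow> 4 \<Rightarrow> real^4 \<Rightarrow> real" where
  "torTrU E a X = (\<Sum>b\<in>UNIV. eta a b * torTr E b X)"

definition superpot :: "frame \<Rightarrow> 4 \<Rightarrow> 4 \<Rightarrow> 4 \<Rightarrow> real^4 \<Rightarrow> real" where
  "superpot E l m n X =
     (1/4) * (torU E l m n X + torU E m l n X - torU E n l m X)
   + (1/2) * (eta l n * torTrU E m X - eta l m * torTrU E n X)"

definition torScalar :: "frame \<Rightarrow> real^4 \<Rightarrow> real" where
  "torScalar E X = (\<Sum>a\<in>UNIV. \<Sum>b\<in>UNIV. \<Sum>c\<in>UNIV. superpot E a b c X * torL E a b c X)"

text \<open>Gravitational energy-momentum density
  t^{mu a} = k (4 Sigma^{bc mu} T_{bc}^a - e^{a mu} T), k = 1/(16 pi),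
  with Sigma^{bc mu} = Sigma^{bcd} e_d^mu, T_{bc}^a = T_{bcd} eta^{da}, e^{a mu} = eta^{ab} e_b^mu.\<close>
definition gravEM :: "frame \<Rightarrow> 4 \<Rightarrow> 4 \<Rightarrow> real^4 \<Rightarrow> real" where
  "gravEM E \<mu> a X = (1 / (16 * pi)) *
     (4 * (\<Sum>b\<in>UNIV. \<Sum>c\<in>UNIV.
            (\<Sum>d\<in>UNIV. superpot E b c d X * (E d X)$\<mu>) *
            (\<Sum>d\<in>UNIV. torL E b c d X * eta d a))
      - (\<Sum>b\<in>UNIV. eta a b * (E b X)$\<mu>) * torScalar E X)"

text \<open>The frame obtained from the observer's tetrad e_a(tau) by parallel transport
  (Levi-Civita of Minkowski space: Cartesian components are constant) along the
  hyperplane orthogonal to e_(0)(tau): at a point X on the hyperplane of tau X,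
  the frame is e_a(tau X).\<close>
definition transported_frame :: "(4 \<Rightarrow> real \<Rightarrow> real^4) \<Rightarrow> (real^4 \<Rightarrow> real) \<Rightarrow> frame" where
  "transported_frame e tau a X = e a (tau X)"

end

theory Submission
  imports Defs
begin

text \<open>The transported frame depends on the point only through the time function \<open>tau\<close>, so
  the torsion of its coframe is the wedge product \<open>T\<^sup>a = d tau \<and> de\<^sup>a/d tau\<close>.
  Differentiating the hyperplane condition shows that \<open>d tau\<close> is a multiple \<open>C\<close> of the
  covector dual to the 4-velocity \<open>e\<^sub>0\<close>, and differentiating orthonormality shows that
  \<open>\<omega>(a, c) = \<langle>e\<^sub>c, de\<^sub>a/d tau\<rangle>\<close> is antisymmetric. Hence
  \<open>T(a, b, c) = C (\<eta>(b, 0) \<omega>(a, c) - \<eta>(c, 0) \<omega>(a, b))\<close>, and for torsion of this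
  shape both the torsion scalar and the contraction of the superpotential with the torsion
  vanish identically.\<close>

lemma UNIV_4_zero_based: "(UNIV :: 4 set) = {0, 1, 2, 3}"
proof -
  have four: "(4 :: 4) = 0"
    by simp
  show ?thesis
    using UNIV_4 unfolding four by (simp add: insert_commute)
qed

lemma exhaust_4_zero_based: "(a :: 4) = 0 \<or> a = 1 \<or> a = 2 \<or> a = 3"
proof -
  have "a \<in> {0, 1, 2, 3}"
    unfolding UNIV_4_zero_based[symmetric] by (rule UNIV_I)
  then show ?thesis
    by blast
qed

lemma sum_UNIV_4: "sum f (UNIV :: 4 set) = f 0 + f 1 + f 2 + f 3"
  unfolding UNIV_4_zero_based by (simp add: ac_simps)

lemma sum_sum_contract_swap:
  fixes S :: "'b \<Rightarrow> 'c \<Rightarrow> 'd \<Rightarrow> 'a::comm_semiring_0"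
  shows "(\<Sum>b\<in>B. \<Sum>c\<in>C. (\<Sum>d\<in>D. S b c d * y d) * Z b c) =
    (\<Sum>d\<in>D. y d * (\<Sum>b\<in>B. \<Sum>c\<in>C. S b c d * Z b c))"
  unfolding sum_distrib_left sum_distrib_right
  by (subst sum.swap, rule sum.cong, simp, subst sum.swap) (simp add: mult_ac)

lemma eta_values:
  "eta 0 0 = 1" "eta 1 1 = -1" "eta 2 2 = -1" "eta 3 3 = -1"
  "eta 0 1 = 0" "eta 0 2 = 0" "eta 0 3 = 0" "eta 1 0 = 0" "eta 2 0 = 0" "eta 3 0 = 0"
  "eta 1 2 = 0" "eta 1 3 = 0" "eta 2 1 = 0" "eta 3 1 = 0" "eta 2 3 = 0" "eta 3 2 = 0"
  by (simp_all add: eta_def)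

lemma eta_sym: "eta a b = eta b a"
  by (simp add: eta_def)

lemma eta_square: "eta a a * eta a a = 1"
  by (simp add: eta_def)

lemma sum_eta_left: "(\<Sum>b\<in>UNIV. eta a b * f b) = eta a a * f a"
proof -
  have "(\<Sum>b\<in>UNIV. eta a b * f b) = (\<Sum>b\<in>UNIV. if b = a then eta a a * f a else 0)"
    by (rule sum.cong) (auto simp: eta_def)
  then show ?thesis
    by simp
qed

lemma sum_eta_right: "(\<Sum>b\<in>UNIV. f b * eta b a) = f a * eta a a"
  using sum_eta_left[of a f] by (simp add: eta_sym mult.commute)

lemma mink_diag: "mink u v = (\<Sum>\<mu>\<in>UNIV. eta \<mu> \<mu> * u$\<mu> * v$\<mu>)"
  unfolding mink_def by (simp add: mult.assoc sum_eta_left)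

lemma mink_sym: "mink u v = mink v u"
  by (simp add: mink_diag ac_simps)

lemma mink_axis: "mink u (axis \<mu> 1) = eta \<mu> \<mu> * u$\<mu>"
  by (simp add: mink_diag axis_def if_distrib cong: if_cong)

lemma bounded_bilinear_mink: "bounded_bilinear mink"
  unfolding bilinear_conv_bounded_bilinear[symmetric] bilinear_def
  by (intro allI conjI linearI)
    (simp_all add: mink_diag distrib_left distrib_right sum.distrib sum_distrib_left mult_ac)

lemmas mink_diff_right = bounded_bilinear.diff_right[OF bounded_bilinear_mink]
lemmas mink_scaleR_left = bounded_bilinear.scaleR_left[OF bounded_bilinear_mink]
lemmas mink_scaleR_right = bounded_bilinear.scaleR_right[OF bounded_bilinear_mink]

lemmas has_derivative_mink = bounded_bilinear.FDERIV[OF bounded_bilinear_mink]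

lemma mink_derivative_const:
  fixes f g :: "real \<Rightarrow> real^4"
  assumes "(f has_vector_derivative f') (at s)" "(g has_vector_derivative g') (at s)"
    and "\<And>t. mink (f t) (g t) = c"
  shows "mink (f s) g' + mink f' (g s) = 0"
proof -
  have "((\<lambda>t. mink (f t) (g t)) has_derivative
        (\<lambda>h. mink (f s) (h *\<^sub>R g') + mink (h *\<^sub>R f') (g s))) (at s)"
    using has_derivative_mink assms(1,2) unfolding has_vector_derivative_def by blast
  moreover have "((\<lambda>t. mink (f t) (g t)) has_derivative (\<lambda>h. 0)) (at s)"
    using assms(3) by simp
  ultimately have "(\<lambda>h. mink (f s) (h *\<^sub>R g') + mink (h *\<^sub>R f') (g s)) = (\<lambda>h. 0)"
    by (rule has_derivative_unique)
  from fun_cong[OF this, of 1] show ?thesis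
    by simp
qed

lemma hyperplane_time_gradient:
  fixes x e0 :: "real \<Rightarrow> real^4" and tau :: "real^4 \<Rightarrow> real"
  assumes x': "(x has_vector_derivative e0 (tau X)) (at (tau X))"
    and e0': "(e0 has_vector_derivative e0') (at (tau X))"
    and tau': "(tau has_derivative T') (at X)"
    and U: "open U" "X \<in> U"
    and hyperplane: "\<And>Y. Y \<in> U \<Longrightarrow> mink (e0 (tau Y)) (Y - x (tau Y)) = 0"
    and unit: "mink (e0 (tau X)) (e0 (tau X)) = 1"
  obtains C where "\<And>v. T' v = C * mink (e0 (tau X)) v"
proof -
  define u where "u = e0 (tau X)"
  define w where "w = X - x (tau X)"
  define m where "m = mink e0' w"
  have "((\<lambda>Y. mink (e0 (tau Y)) (Y - x (tau Y))) has_derivative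
      (\<lambda>v. mink u (v - T' v *\<^sub>R u) + mink (T' v *\<^sub>R e0') w)) (at X)"
    unfolding u_def w_def
    using x' e0' unfolding has_vector_derivative_def
    by (intro has_derivative_mink has_derivative_diff has_derivative_ident
        has_derivative_compose[OF tau']) auto
  moreover have "((\<lambda>Y. mink (e0 (tau Y)) (Y - x (tau Y))) has_derivative (\<lambda>v. 0)) (at X)"
    by (rule has_derivative_transform_within_open[OF has_derivative_const U])
      (simp add: hyperplane)
  ultimately have "(\<lambda>v. mink u (v - T' v *\<^sub>R u) + mink (T' v *\<^sub>R e0') w) = (\<lambda>v. 0)"
    by (rule has_derivative_unique)
  then have "mink u (v - T' v *\<^sub>R u) + mink (T' v *\<^sub>R e0') w = 0" for v
    by (rule fun_cong)
  then have balance: "mink u v = (1 - m) * T' v" for v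
    using unit unfolding u_def[symmetric]
    by (simp add: mink_diff_right mink_scaleR_left mink_scaleR_right m_def[symmetric] algebra_simps)
  have "1 - m \<noteq> 0"
    using balance[of u] unit by (auto simp: u_def)
  with balance have "T' v = 1 / (1 - m) * mink u v" for v
    by simp
  then show ?thesis
    using that u_def by blast
qed

lemma coframe_diag: "coframe E a \<mu> X = eta a a * eta \<mu> \<mu> * E a X $ \<mu>"
proof -
  have "coframe E a \<mu> X = (\<Sum>b\<in>UNIV. eta a b * (\<Sum>\<nu>\<in>UNIV. eta \<mu> \<nu> * E b X $ \<nu>))"
    by (simp add: coframe_def sum_distrib_left mult.assoc)
  then show ?thesis
    by (simp add: sum_eta_left)
qed

lemma pd_eq_derivative:
  assumes "(f has_derivative f') (at X)"
  shows "pd f \<mu> X = f' (axis \<mu> 1)"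
  using frechet_derivative_at[OF assms] by (simp add: pd_def)

lemma torsion_rank_one_frame:
  assumes "\<And>b. (E b has_derivative (\<lambda>v. T' v *\<^sub>R E' b)) (at X)"
  shows "torsion E a \<mu> \<nu> X =
    eta a a * (T' (axis \<mu> 1) * eta \<nu> \<nu> * E' a $ \<nu> - T' (axis \<nu> 1) * eta \<mu> \<mu> * E' a $ \<mu>)"
proof -
  have coframe_derivative: "((\<lambda>Y. coframe E a \<nu> Y) has_derivative
      (\<lambda>v. eta a a * eta \<nu> \<nu> * (T' v *\<^sub>R E' a) $ \<nu>)) (at X)" for \<nu>
    unfolding coframe_diag
    by (intro has_derivative_mult_right bounded_linear.has_derivative[OF bounded_linear_vec_nth assms])
  have "pd (\<lambda>Y. coframe E a \<nu> Y) \<mu> X = eta a a * eta \<nu> \<nu> * T' (axis \<mu> 1) * E' a $ \<nu>"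
    for \<mu> \<nu>
    using pd_eq_derivative[OF coframe_derivative] by simp
  then show ?thesis
    by (simp add: torsion_def algebra_simps)
qed

lemma sum_wedge_mink:
  "(\<Sum>\<mu>\<in>UNIV. \<Sum>\<nu>\<in>UNIV. u $ \<mu> * v $ \<nu> *
      (eta \<mu> \<mu> * p $ \<mu> * (eta \<nu> \<nu> * q $ \<nu>) - eta \<nu> \<nu> * p $ \<nu> * (eta \<mu> \<mu> * q $ \<mu>)))
   = mink u p * mink v q - mink u q * mink v p"
proof -
  have "mink u p * mink v q - mink u q * mink v p =
    (\<Sum>\<mu>\<in>UNIV. \<Sum>\<nu>\<in>UNIV. eta \<mu> \<mu> * u $ \<mu> * p $ \<mu> * (eta \<nu> \<nu> * v $ \<nu> * q $ \<nu>)
      - eta \<mu> \<mu> * u $ \<mu> * q $ \<mu> * (eta \<nu> \<nu> * v $ \<nu> * p $ \<nu>))"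
    by (simp add: mink_diag sum_product sum_subtractf)
  then show ?thesis
    by (simp add: algebra_simps)
qed

lemma torL_rank_one_frame:
  assumes "\<And>b. (E b has_derivative (\<lambda>v. (C * mink u v) *\<^sub>R E' b)) (at X)"
  shows "torL E a b c X =
    C * (mink (E b X) u * mink (E c X) (E' a) - mink (E b X) (E' a) * mink (E c X) u)"
proof -
  have torsion_eq: "torsion E d \<mu> \<nu> X = eta d d * C *
      (eta \<mu> \<mu> * u $ \<mu> * (eta \<nu> \<nu> * E' d $ \<nu>) - eta \<nu> \<nu> * u $ \<nu> * (eta \<mu> \<mu> * E' d $ \<mu>))"
    for d \<mu> \<nu>
    using torsion_rank_one_frame[where T' = "\<lambda>v. C * mink u v" and E = E and E' = E', OF assms,
        of d \<mu> \<nu>]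
    by (simp add: mink_axis algebra_simps)
  have contracted: "(\<Sum>\<mu>\<in>UNIV. \<Sum>\<nu>\<in>UNIV. E b X $ \<mu> * E c X $ \<nu> * torsion E d \<mu> \<nu> X) =
      eta d d * C * (mink (E b X) u * mink (E c X) (E' d) - mink (E b X) (E' d) * mink (E c X) u)" for d
    unfolding torsion_eq sum_wedge_mink[symmetric] by (simp add: sum_distrib_left mult_ac)
  have "torL E a b c X =
      (\<Sum>d\<in>UNIV. eta a d * (\<Sum>\<mu>\<in>UNIV. \<Sum>\<nu>\<in>UNIV. E b X $ \<mu> * E c X $ \<nu> * torsion E d \<mu> \<nu> X))"
    by (simp add: torL_def sum_distrib_left mult.assoc)
  also have "\<dots> = (eta a a * eta a a) * C *
      (mink (E b X) u * mink (E c X) (E' a) - mink (E b X) (E' a) * mink (E c X) u)"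
    unfolding contracted sum_eta_left by (simp add: mult.assoc)
  finally show ?thesis
    by (simp add: eta_square)
qed

lemma torU_diag: "torU E a b c X = eta a a * eta b b * eta c c * torL E a b c X"
proof -
  have "torU E a b c X =
      (\<Sum>d\<in>UNIV. eta a d * (\<Sum>f\<in>UNIV. eta b f * (\<Sum>h\<in>UNIV. eta c h * torL E d f h X)))"
    unfolding torU_def by (simp only: sum_distrib_left mult.assoc)
  then show ?thesis
    unfolding sum_eta_left by (simp only: mult.assoc)
qed

lemma torTr_diag: "torTr E a X = (\<Sum>b\<in>UNIV. eta b b * torL E b b a X)"
  by (simp add: torTr_def sum_eta_left)

lemma torTrU_diag: "torTrU E a X = eta a a * torTr E a X"
  by (simp add: torTrU_def sum_eta_left)

context
  fixes E :: frame and X :: "real^4" and C :: real and \<omega> :: "4 \<Rightarrow> 4 \<Rightarrow> real"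
  assumes omega_antisym: "\<And>a c. \<omega> a c = - \<omega> c a"
    and torL_eq: "\<And>a b c. torL E a b c X = C * (eta b 0 * \<omega> a c - eta c 0 * \<omega> a b)"
begin

lemma omega_diag: "\<omega> a a = 0"
  using omega_antisym[of a a] by simp

lemmas omega_swap = omega_antisym[of 1 0] omega_antisym[of 2 0] omega_antisym[of 3 0]
  omega_antisym[of 2 1] omega_antisym[of 3 1] omega_antisym[of 3 2]

lemma torTr_eq: "torTr E a X = C * \<omega> 0 a"
  by (simp add: torTr_diag torL_eq omega_diag sum_UNIV_4 eta_values)

lemma superpot_eq:
  "superpot E l m n X =
     1/4 * eta l l * eta m m * eta n n * (torL E l m n X + torL E m l n X - torL E n l m X)
   + 1/2 * C * (eta l n * eta m m * \<omega> 0 m - eta l m * eta n n * \<omega> 0 n)"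
  by (simp add: superpot_def torU_diag torTrU_diag torTr_eq algebra_simps)

lemma torScalar_eq_0: "torScalar E X = 0"
  by (simp add: torScalar_def superpot_eq torL_eq sum_UNIV_4 eta_values omega_diag omega_swap
      algebra_simps)

lemma superpot_torsion_contraction_eq_0:
  "(\<Sum>b\<in>UNIV. \<Sum>c\<in>UNIV. superpot E b c d X * (\<Sum>f\<in>UNIV. torL E b c f X * eta f a)) = 0"
  using exhaust_4_zero_based[of d] exhaust_4_zero_based[of a]
  by (elim disjE)
    (simp_all add: sum_eta_right superpot_eq torL_eq sum_UNIV_4 eta_values omega_diag omega_swap
      algebra_simps)

lemma gravEM_eq_0: "gravEM E \<mu> a X = 0"
proof -
  have "(\<Sum>b\<in>UNIV. \<Sum>c\<in>UNIV. (\<Sum>d\<in>UNIV. superpot E b c d X * E d X $ \<mu>) *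
        (\<Sum>f\<in>UNIV. torL E b c f X * eta f a)) =
      (\<Sum>d\<in>UNIV. E d X $ \<mu> *
        (\<Sum>b\<in>UNIV. \<Sum>c\<in>UNIV. superpot E b c d X * (\<Sum>f\<in>UNIV. torL E b c f X * eta f a)))"
    by (rule sum_sum_contract_swap)
  then show ?thesis
    by (simp add: gravEM_def superpot_torsion_contraction_eq_0 torScalar_eq_0)
qed

end

lemma torL_transported_frame:
  assumes velocity: "(x has_vector_derivative e 0 (tau X)) (at (tau X))"
    and tetrad: "\<And>a. (e a has_vector_derivative e' a) (at (tau X))"
    and orthonormal: "\<And>a b. mink (e a (tau X)) (e b (tau X)) = eta a b"
    and tau: "tau differentiable (at X)"
    and U: "open U" "X \<in> U"
    and hyperplane: "\<And>Y. Y \<in> U \<Longrightarrow> mink (e 0 (tau Y)) (Y - x (tau Y)) = 0"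
  obtains C where "\<And>a b c. torL (transported_frame e tau) a b c X =
    C * (eta b 0 * mink (e c (tau X)) (e' a) - eta c 0 * mink (e b (tau X)) (e' a))"
proof -
  obtain T' where tau': "(tau has_derivative T') (at X)"
    using tau unfolding differentiable_def by blast
  obtain C where T': "\<And>v. T' v = C * mink (e 0 (tau X)) v"
    using hyperplane_time_gradient[OF velocity tetrad tau' U hyperplane] orthonormal[of 0 0]
    by (auto simp: eta_values)
  have frame_derivative: "(transported_frame e tau b has_derivative
      (\<lambda>v. (C * mink (e 0 (tau X)) v) *\<^sub>R e' b)) (at X)" for b
    using has_derivative_compose[OF tau' tetrad[of b, unfolded has_vector_derivative_def]]
    by (simp add: transported_frame_def[abs_def] T')
  have "torL (transported_frame e tau) a b c X =
      C * (eta b 0 * mink (e c (tau X)) (e' a) - eta c 0 * mink (e b (tau X)) (e' a))" for a b c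
    using torL_rank_one_frame[where E = "transported_frame e tau", OF frame_derivative, of a b c]
    by (simp add: transported_frame_def orthonormal algebra_simps)
  then show ?thesis
    by (rule that)
qed

theorem mainTheorem1:
  fixes x :: "real \<Rightarrow> real^4"
    and e :: "4 \<Rightarrow> real \<Rightarrow> real^4"
    and U :: "(real^4) set"
    and tau :: "real^4 \<Rightarrow> real"
  assumes velocity: "\<And>s. (x has_vector_derivative e 0 s) (at s)"
    and tetrad_diff: "\<And>a s. e a differentiable (at s)"
    and orthonormal: "\<And>a b s. mink (e a s) (e b s) = eta a b"
    and U_open: "open U"
    and tau_diff: "\<And>X. X \<in> U \<Longrightarrow> tau differentiable (at X)"
    and hyperplane: "\<And>X. X \<in> U \<Longrightarrow> mink (e 0 (tau X)) (X - x (tau X)) = 0"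
  shows "\<forall>X\<in>U. \<forall>\<mu> a. gravEM (transported_frame e tau) \<mu> a X = 0"
proof (intro ballI allI)
  fix X \<mu> a
  assume "X \<in> U"
  define e' where "e' a = vector_derivative (e a) (at (tau X))" for a
  define \<omega> where "\<omega> a c = mink (e c (tau X)) (e' a)" for a c
  have tetrad: "(e a has_vector_derivative e' a) (at (tau X))" for a
    unfolding e'_def using tetrad_diff vector_derivative_works by blast
  have "\<omega> a c = - \<omega> c a" for a c
    using mink_derivative_const[OF tetrad[of a] tetrad[of c] orthonormal[where a = a and b = c]]
      mink_sym[of "e' a"]
    by (simp add: \<omega>_def algebra_simps)
  moreover obtain C where "\<And>a b c. torL (transported_frame e tau) a b c X =
      C * (eta b 0 * \<omega> a c - eta c 0 * \<omega> a b)"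
    using torL_transported_frame[OF velocity tetrad orthonormal tau_diff U_open]
      \<open>X \<in> U\<close> hyperplane unfolding \<omega>_def by blast
  ultimately show "gravEM (transported_frame e tau) \<mu> a X = 0"
    by (rule gravEM_eq_0)
qed

end
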